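(* For each $n$, the set $\{\mathfrak{L}_a : a \text{ a weak composition of length } n\}$ is a basis of the polynomial ring $\mathbb{Z}[x_1,\ldots,x_n]$.
   Context: A weak composition of length $n$ is a sequence $a=(a_1,\ldots,a_n)$ of nonnegative integers; $x^a=x_1^{a_1}\cdots x_n^{a_n}$. A local move replaces consecutive entries $(0,k)$ at positions $p,p+1$ by $(i,j)$ with $i+j=k$, $i,j\ge0$. A fixed slide of $a$ is a weak composition obtained from $a$ by a (possibly empty) sequence of local moves in which $j>0$ is required whenever $a_{p+1}\ne 0$. The fundamental particle is $\mathfrak{L}_a=\sum x^b$ over the set of fixed slides $b$ of $a$. *)

theory Defs
  imports Main
begin

text \<open>A polynomial in Z[x_1,...,x_n] is represented by its coefficient function
(monomial exponent vector, a weak composition of length n) \<Rightarrow> int, with finite support.\<close>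

definition wcomps :: "nat \<Rightarrow> nat list set" where
  "wcomps n = {a. length a = n}"

definition int_poly_space :: "nat \<Rightarrow> (nat list \<Rightarrow> int) set" where
  "int_poly_space n = {f. finite {b. f b \<noteq> 0} \<and> (\<forall>b. f b \<noteq> 0 \<longrightarrow> length b = n)}"

definition fixed_move :: "nat list \<Rightarrow> nat list \<Rightarrow> nat list \<Rightarrow> bool" where
  "fixed_move a c d \<longleftrightarrow>
     (\<exists>p i j. Suc p < length c \<and> c ! p = 0 \<and> i + j = c ! Suc p \<and>
        (a ! Suc p \<noteq> 0 \<longrightarrow> 0 < j) \<and> d = c[p := i, Suc p := j])"

definition fixed_slides :: "nat list \<Rightarrow> nat list set" where
  "fixed_slides a = {b. (fixed_move a)\<^sup>*\<^sup>* a b}"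

text \<open>The fundamental particle L_a = sum of x^b over fixed slides b of a, as a coefficient function.\<close>

definition fundamental_particle :: "nat list \<Rightarrow> nat list \<Rightarrow> int" where
  "fundamental_particle a = (\<lambda>b. if b \<in> fixed_slides a then 1 else 0)"

end

theory Submission
  imports Defs
begin

text \<open>Order monomials by the weight \<open>\<Sum>\<^sub>q q \<cdot> b\<^sub>q\<close>. A local move
  \<open>(0, i + j) \<mapsto> (i, j)\<close> at positions \<open>p, p + 1\<close> lowers the weight by \<open>i\<close> and is the
  identity when \<open>i = 0\<close>, so every fixed slide of \<open>a\<close> other than \<open>a\<close> itself is strictly
  lighter than \<open>a\<close>: the particles are unitriangular with respect to the monomials.
  Subtracting from a polynomial the particles of its heaviest monomials lowers its maximal
  weight, so induction on that weight expresses it in particles; and evaluating a vanishing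
  combination at its heaviest index with nonzero coefficient yields a contradiction.\<close>

locale unitriangular_family =
  fixes F :: "'a \<Rightarrow> 'a \<Rightarrow> 'r::ring_1" and w :: "'a \<Rightarrow> nat"
  assumes diagonal: "F a a = 1"
    and triangular: "F a b \<noteq> 0 \<Longrightarrow> b \<noteq> a \<Longrightarrow> w b < w a"
    and finite_support: "finite {b. F a b \<noteq> 0}"
begin

definition lin_comb :: "'a set \<Rightarrow> ('a \<Rightarrow> 'r) set" where
  "lin_comb A = {\<lambda>b. \<Sum>a\<in>S. c a * F a b | S c. finite S \<and> S \<subseteq> A}"

lemma lin_comb_add:
  assumes "f \<in> lin_comb A" "g \<in> lin_comb A"
  shows "(\<lambda>b. f b + g b) \<in> lin_comb A"
proof -
  obtain S1 c1 where S1: "finite S1" "S1 \<subseteq> A" "f = (\<lambda>b. \<Sum>a\<in>S1. c1 a * F a b)"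
    using assms(1) unfolding lin_comb_def by blast
  obtain S2 c2 where S2: "finite S2" "S2 \<subseteq> A" "g = (\<lambda>b. \<Sum>a\<in>S2. c2 a * F a b)"
    using assms(2) unfolding lin_comb_def by blast
  define c where "c a = (if a \<in> S1 then c1 a else 0) + (if a \<in> S2 then c2 a else 0)" for a
  have "(\<Sum>a\<in>S1 \<union> S2. c a * F a b) = f b + g b" for b
  proof -
    have "(\<Sum>a\<in>S1 \<union> S2. c a * F a b) =
        (\<Sum>a\<in>S1 \<union> S2. if a \<in> S1 then c1 a * F a b else 0) +
        (\<Sum>a\<in>S1 \<union> S2. if a \<in> S2 then c2 a * F a b else 0)"
      unfolding c_def sum.distrib[symmetric] by (intro sum.cong) (auto simp: distrib_right)
    also have "\<dots> = f b + g b"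
      using S1 S2 by (simp add: sum.inter_restrict[symmetric] Int_absorb1)
    finally show ?thesis .
  qed
  then show ?thesis
    unfolding lin_comb_def using S1(1,2) S2(1,2)
    by (intro CollectI exI[of _ "S1 \<union> S2"] exI[of _ c]) auto
qed

lemma sum_eval_at_heaviest:
  assumes "finite S" and heaviest: "\<And>a. a \<in> S \<Longrightarrow> c a \<noteq> 0 \<Longrightarrow> w a \<le> w b"
  shows "(\<Sum>a\<in>S. c a * F a b) = (if b \<in> S then c b else 0)"
proof -
  have "c a * F a b = (if a = b then c b else 0)" if "a \<in> S" for a
    using heaviest[OF that] triangular[of a b]
    by (cases "a = b"; cases "F a b = 0"; cases "c a = 0") (auto simp: diagonal)
  then have "(\<Sum>a\<in>S. c a * F a b) = (\<Sum>a\<in>S. if a = b then c b else 0)"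
    by (rule sum.cong[OF refl])
  then show ?thesis
    using \<open>finite S\<close> by simp
qed

lemma linearly_independent:
  assumes "finite S" and vanishing: "\<And>b. (\<Sum>a\<in>S. c a * F a b) = 0" and "a \<in> S"
  shows "c a = 0"
proof (rule ccontr)
  assume "c a \<noteq> 0"
  define T where "T = {a \<in> S. c a \<noteq> 0}"
  have "finite T" "T \<noteq> {}"
    using \<open>finite S\<close> \<open>a \<in> S\<close> \<open>c a \<noteq> 0\<close> by (auto simp: T_def)
  then have "Max (w ` T) \<in> w ` T"
    by simp
  then obtain b where "b \<in> T" and b_max: "w b = Max (w ` T)"
    by auto
  then have b: "b \<in> S" "c b \<noteq> 0"
    by (auto simp: T_def)
  have max: "w a \<le> w b" if "a \<in> S" "c a \<noteq> 0" for a
    using that \<open>finite T\<close> by (simp add: b_max T_def)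
  have "(\<Sum>a\<in>S. c a * F a b) = c b"
    using sum_eval_at_heaviest[OF \<open>finite S\<close> max] b by simp
  with vanishing b show False
    by simp
qed

lemma lin_comb_if_weight_bounded:
  assumes "finite {b. f b \<noteq> 0}" "{b. f b \<noteq> 0} \<subseteq> A"
    and closed: "\<And>a b. a \<in> A \<Longrightarrow> F a b \<noteq> 0 \<Longrightarrow> b \<in> A"
    and "\<And>b. f b \<noteq> 0 \<Longrightarrow> w b < m"
  shows "f \<in> lin_comb A"
  using assms(1,2,4)
proof (induction m arbitrary: f)
  case 0
  then have "f = (\<lambda>b. \<Sum>a\<in>{}. 0 * F a b)"
    by auto
  then show ?case
    unfolding lin_comb_def by (intro CollectI exI[of _ "{}"] exI[of _ "\<lambda>_. 0"]) auto
next
  case (Suc m)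
  define T where "T = {a. f a \<noteq> 0 \<and> w a = m}"
  define h where "h b = (\<Sum>a\<in>T. f a * F a b)" for b
  have T: "finite T" "T \<subseteq> A"
    using Suc.prems(1,2) unfolding T_def by (auto intro: finite_subset)
  have h_support: "{b. h b \<noteq> 0} \<subseteq> (\<Union>a\<in>T. {b. F a b \<noteq> 0})"
    unfolding h_def by (auto elim!: sum.not_neutral_contains_not_neutral)
  have h_top: "h b = f b" if "m \<le> w b" for b
  proof -
    have "h b = (if b \<in> T then f b else 0)"
      unfolding h_def using T(1) that by (intro sum_eval_at_heaviest) (auto simp: T_def)
    then show ?thesis
      using Suc.prems(3)[of b] that by (cases "f b = 0") (auto simp: T_def)
  qed
  define g where "g b = f b - h b" for b
  have g_support: "{b. g b \<noteq> 0} \<subseteq> {b. f b \<noteq> 0} \<union> (\<Union>a\<in>T. {b. F a b \<noteq> 0})"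
    using h_support unfolding g_def by auto
  have "g \<in> lin_comb A"
  proof (rule Suc.IH)
    show "finite {b. g b \<noteq> 0}"
      using g_support Suc.prems(1) T(1) finite_support by (auto intro: finite_subset)
    show "{b. g b \<noteq> 0} \<subseteq> A"
      using g_support Suc.prems(2) T(2) closed by blast
    show "w b < m" if "g b \<noteq> 0" for b
      using that h_top[of b] unfolding g_def by fastforce
  qed
  moreover have "h \<in> lin_comb A"
    unfolding lin_comb_def h_def[abs_def] using T by blast
  ultimately have "(\<lambda>b. g b + h b) \<in> lin_comb A"
    by (rule lin_comb_add)
  then show ?case
    unfolding g_def by simp
qed

lemma spanning:
  assumes "finite {b. f b \<noteq> 0}" "{b. f b \<noteq> 0} \<subseteq> A"
    and "\<And>a b. a \<in> A \<Longrightarrow> F a b \<noteq> 0 \<Longrightarrow> b \<in> A"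
  shows "f \<in> lin_comb A"
proof (rule lin_comb_if_weight_bounded[OF assms])
  show "w b < Suc (Max (w ` {b. f b \<noteq> 0}))" if "f b \<noteq> 0" for b
    using assms(1) that by (simp add: le_imp_less_Suc)
qed

end

definition weight :: "nat list \<Rightarrow> nat" where
  "weight b = (\<Sum>q<length b. q * b ! q)"

lemma weight_list_update:
  assumes "p < length xs"
  shows "weight (xs[p := v]) + p * xs ! p = weight xs + p * v"
proof -
  have rest: "(\<Sum>q\<in>{..<length xs} - {p}. q * xs[p := v] ! q) = (\<Sum>q\<in>{..<length xs} - {p}. q * xs ! q)"
    by (intro sum.cong) auto
  have "weight (xs[p := v]) = p * v + (\<Sum>q\<in>{..<length xs} - {p}. q * xs[p := v] ! q)"
    unfolding weight_def using assms by (simp add: sum.remove)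
  moreover have "weight xs = p * xs ! p + (\<Sum>q\<in>{..<length xs} - {p}. q * xs ! q)"
    unfolding weight_def using assms by (simp add: sum.remove)
  ultimately show ?thesis
    using rest by simp
qed

lemma fixed_move_invariants:
  assumes "fixed_move a c d"
  shows "length d = length c" "sum_list d = sum_list c" "d = c \<or> weight d < weight c"
proof -
  obtain p i j where p: "Suc p < length c" and "c ! p = 0" "c ! Suc p = i + j"
      and d: "d = c[p := i, Suc p := j]"
    using assms unfolding fixed_move_def by (metis add.commute)
  then show "length d = length c"
    by simp
  show "sum_list d = sum_list c"
    using p \<open>c ! p = 0\<close> \<open>c ! Suc p = i + j\<close> by (simp add: d sum_list_update)
  have "weight (c[p := i]) = weight c + p * i"
    using weight_list_update[of p c i] p \<open>c ! p = 0\<close> by simp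
  moreover have "weight d + Suc p * (i + j) = weight (c[p := i]) + Suc p * j"
    using weight_list_update[of "Suc p" "c[p := i]" j] p \<open>c ! Suc p = i + j\<close> by (simp add: d)
  ultimately have "weight d + i = weight c"
    by (simp add: algebra_simps)
  moreover have "d = c" if "i = 0"
    using that \<open>c ! p = 0\<close> \<open>c ! Suc p = i + j\<close> by (simp add: d) (metis list_update_id)
  ultimately show "d = c \<or> weight d < weight c"
    by (cases "i = 0") auto
qed

lemma fixed_slide_invariants:
  assumes "b \<in> fixed_slides a"
  shows "length b = length a" "sum_list b = sum_list a" "b = a \<or> weight b < weight a"
proof -
  have "(fixed_move a)\<^sup>*\<^sup>* a b"
    using assms unfolding fixed_slides_def by simp
  then have "length b = length a \<and> sum_list b = sum_list a \<and> (b = a \<or> weight b < weight a)"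
  proof (induction rule: rtranclp_induct)
    case (step c d)
    with fixed_move_invariants[OF step(2)] show ?case
      by auto
  qed simp
  then show "length b = length a" "sum_list b = sum_list a" "b = a \<or> weight b < weight a"
    by auto
qed

lemma finite_fixed_slides: "finite (fixed_slides a)"
proof (rule finite_subset)
  show "fixed_slides a \<subseteq> {b. set b \<subseteq> {0..sum_list a} \<and> length b = length a}"
    using fixed_slide_invariants(1,2) by (fastforce dest: member_le_sum_list)
  show "finite {b. set b \<subseteq> {0..sum_list a} \<and> length b = length a}"
    by (rule finite_lists_length_eq) simp
qed

lemma fundamental_particle_support: "{b. fundamental_particle a b \<noteq> 0} = fixed_slides a"
  by (simp add: fundamental_particle_def)

interpretation particles: unitriangular_family fundamental_particle weight
proof
  show "fundamental_particle a a = 1" for a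
    by (simp add: fundamental_particle_def fixed_slides_def)
  show "weight b < weight a" if "fundamental_particle a b \<noteq> 0" "b \<noteq> a" for a b
    using that fixed_slide_invariants(3)[of b a] by (simp add: fundamental_particle_def split: if_splits)
  show "finite {b. fundamental_particle a b \<noteq> 0}" for a
    by (simp add: fundamental_particle_support finite_fixed_slides)
qed

lemma fundamental_particle_wcomps:
  "a \<in> wcomps n \<Longrightarrow> fundamental_particle a b \<noteq> 0 \<Longrightarrow> b \<in> wcomps n"
  using fixed_slide_invariants(1)[of b a] by (simp add: wcomps_def fundamental_particle_def split: if_splits)

theorem proposition4p6:
  fixes n :: nat
  shows "(\<forall>a \<in> wcomps n. fundamental_particle a \<in> int_poly_space n) \<and>
    (\<forall>(S :: nat list set) (c :: nat list \<Rightarrow> int).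
        finite S \<and> S \<subseteq> wcomps n \<and>
        (\<forall>b. (\<Sum>a\<in>S. c a * fundamental_particle a b) = 0) \<longrightarrow> (\<forall>a\<in>S. c a = 0)) \<and>
    (\<forall>f \<in> int_poly_space n. \<exists>(S :: nat list set) (c :: nat list \<Rightarrow> int).
        finite S \<and> S \<subseteq> wcomps n \<and> f = (\<lambda>b. \<Sum>a\<in>S. c a * fundamental_particle a b))"
proof (intro conjI allI impI ballI)
  show "fundamental_particle a \<in> int_poly_space n" if "a \<in> wcomps n" for a
    using fundamental_particle_wcomps[OF that] particles.finite_support[of a]
    by (simp add: int_poly_space_def wcomps_def)
  show "c a = 0"
    if "finite S \<and> S \<subseteq> wcomps n \<and> (\<forall>b. (\<Sum>a\<in>S. c a * fundamental_particle a b) = 0)"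
      and "a \<in> S" for S and c :: "nat list \<Rightarrow> int" and a
    using that particles.linearly_independent by blast
  show "\<exists>S c. finite S \<and> S \<subseteq> wcomps n \<and> f = (\<lambda>b. \<Sum>a\<in>S. c a * fundamental_particle a b)"
    if "f \<in> int_poly_space n" for f
  proof -
    have "f \<in> particles.lin_comb (wcomps n)"
    proof (rule particles.spanning)
      show "finite {b. f b \<noteq> 0}" "{b. f b \<noteq> 0} \<subseteq> wcomps n"
        using that by (auto simp: int_poly_space_def wcomps_def)
    qed (rule fundamental_particle_wcomps)
    then show ?thesis
      unfolding particles.lin_comb_def by blast
  qed
qed

end
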